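(* (1) For every $\lambda$-term $M$, $(M^v)^\flat=M$. (2) For every $M\in\,!\Lambda^v$ and $U\in\,!\Lambda^v_{val}$ and variable $x$, $M\{U/x\}\in\,!\Lambda^v$ and $(M\{U/x\})^\flat=M^\flat\{U^\flat/x\}$. (3) For every $M\in\,!\Lambda^v$ and $T\in\,!\Lambda$, if $M\to_b T$ then $T\in\,!\Lambda^v$ and either $M^\flat=T^\flat$ or $M^\flat\to_{\beta_v}T^\flat$.
   Context: Bang calculus. The set $!\Lambda$ of terms is $T,S ::= x \mid \lambda x.T \mid T\,S \mid \mathrm{der}\,T \mid\ !T$; $\lambda$ the only binder, up to $\alpha$-conversion, $T\{S/x\}$ capture-avoiding substitution. Contexts: $C ::= [\cdot] \mid \lambda x.C \mid C\,T \mid T\,C \mid \mathrm{der}\,C \mid\ !C$. Root steps $(\lambda x.T)(!S)\mapsto_v T\{S/x\}$, $\mathrm{der}(!T)\mapsto_d T$; $\to_b$ is the closure of $\mapsto_v\cup\mapsto_d$ under contexts. $\lambda$-calculus: $M ::= V\mid MN$, values $V ::= x\mid\lambda x.M$; $\to_{\beta_v}$ is the closure of $(\lambda x.M)V\mapsto_{\beta_v}M\{V/x\}$ ($V$ a value) under $\lambda$-contexts $C ::= [\cdot]\mid\lambda x.C\mid C\,M\mid M\,C$. CbV translation: $x^v=\,!x$, $(\lambda x.M)^v=\,!(\lambda x.M^v)$, $(MN)^v=(\mathrm{der}\,M^v)\,N^v$. The subsets $!\Lambda^v$ and $!\Lambda^v_{val}$ of $!\Lambda$ are defined by mutual induction: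 $M,N ::=\ !U\mid(\mathrm{der}\,M)\,N\mid U\,M$ (elements of $!\Lambda^v$) and $U ::= x\mid\lambda x.M$ (elements of $!\Lambda^v_{val}$). The forgetful map $(\cdot)^\flat$ from $!\Lambda^v\cup\,!\Lambda^v_{val}$ to $\lambda$-terms: $(!U)^\flat=U^\flat$, $((\mathrm{der}\,M)N)^\flat=M^\flat N^\flat$, $(U\,M)^\flat=U^\flat M^\flat$, $x^\flat=x$, $(\lambda x.M)^\flat=\lambda x.M^\flat$. *)

theory Defs
  imports Main
begin

text \<open>Substitution follows the
  usual de Bruijn convention: \<open>t[s/k]\<close> replaces index k by s and
  decrements indices above k.\<close>

datatype bterm = BVar nat | BLam bterm | BApp bterm bterm | Der bterm | Bang bterm

fun blift :: "bterm \<Rightarrow> nat \<Rightarrow> bterm" where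
  "blift (BVar i) k = (if i < k then BVar i else BVar (i + 1))"
| "blift (BLam t) k = BLam (blift t (k + 1))"
| "blift (BApp t u) k = BApp (blift t k) (blift u k)"
| "blift (Der t) k = Der (blift t k)"
| "blift (Bang t) k = Bang (blift t k)"

fun bsubst :: "bterm \<Rightarrow> bterm \<Rightarrow> nat \<Rightarrow> bterm" where
  "bsubst (BVar i) s k = (if k < i then BVar (i - 1) else if i = k then s else BVar i)"
| "bsubst (BLam t) s k = BLam (bsubst t (blift s 0) (k + 1))"
| "bsubst (BApp t u) s k = BApp (bsubst t s k) (bsubst u s k)"
| "bsubst (Der t) s k = Der (bsubst t s k)"
| "bsubst (Bang t) s k = Bang (bsubst t s k)"

inductive bstep :: "bterm \<Rightarrow> bterm \<Rightarrow> bool" (infix "\<rightarrow>\<^sub>b" 50) where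
  root_v: "BApp (BLam T) (Bang S) \<rightarrow>\<^sub>b bsubst T S 0"
| root_d: "Der (Bang T) \<rightarrow>\<^sub>b T"
| lam: "T \<rightarrow>\<^sub>b T' \<Longrightarrow> BLam T \<rightarrow>\<^sub>b BLam T'"
| appL: "T \<rightarrow>\<^sub>b T' \<Longrightarrow> BApp T S \<rightarrow>\<^sub>b BApp T' S"
| appR: "S \<rightarrow>\<^sub>b S' \<Longrightarrow> BApp T S \<rightarrow>\<^sub>b BApp T S'"
| der: "T \<rightarrow>\<^sub>b T' \<Longrightarrow> Der T \<rightarrow>\<^sub>b Der T'"
| bang: "T \<rightarrow>\<^sub>b T' \<Longrightarrow> Bang T \<rightarrow>\<^sub>b Bang T'"

datatype lterm = LVar nat | LLam lterm | LApp lterm lterm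

fun llift :: "lterm \<Rightarrow> nat \<Rightarrow> lterm" where
  "llift (LVar i) k = (if i < k then LVar i else LVar (i + 1))"
| "llift (LLam t) k = LLam (llift t (k + 1))"
| "llift (LApp t u) k = LApp (llift t k) (llift u k)"

fun lsubst :: "lterm \<Rightarrow> lterm \<Rightarrow> nat \<Rightarrow> lterm" where
  "lsubst (LVar i) s k = (if k < i then LVar (i - 1) else if i = k then s else LVar i)"
| "lsubst (LLam t) s k = LLam (lsubst t (llift s 0) (k + 1))"
| "lsubst (LApp t u) s k = LApp (lsubst t s k) (lsubst u s k)"

fun is_value :: "lterm \<Rightarrow> bool" where
  "is_value (LVar _) = True"
| "is_value (LLam _) = True"
| "is_value (LApp _ _) = False"

inductive beta_v :: "lterm \<Rightarrow> lterm \<Rightarrow> bool" (infix "\<rightarrow>\<^sub>\<beta>\<^sub>v" 50) where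
  root: "is_value V \<Longrightarrow> LApp (LLam M) V \<rightarrow>\<^sub>\<beta>\<^sub>v lsubst M V 0"
| lam: "M \<rightarrow>\<^sub>\<beta>\<^sub>v M' \<Longrightarrow> LLam M \<rightarrow>\<^sub>\<beta>\<^sub>v LLam M'"
| appL: "M \<rightarrow>\<^sub>\<beta>\<^sub>v M' \<Longrightarrow> LApp M N \<rightarrow>\<^sub>\<beta>\<^sub>v LApp M' N"
| appR: "N \<rightarrow>\<^sub>\<beta>\<^sub>v N' \<Longrightarrow> LApp M N \<rightarrow>\<^sub>\<beta>\<^sub>v LApp M N'"

fun cbv :: "lterm \<Rightarrow> bterm" where
  "cbv (LVar x) = Bang (BVar x)"
| "cbv (LLam M) = Bang (BLam (cbv M))"
| "cbv (LApp M N) = BApp (Der (cbv M)) (cbv N)"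

inductive bv :: "bterm \<Rightarrow> bool" and bvval :: "bterm \<Rightarrow> bool" where
  bv_bang: "bvval U \<Longrightarrow> bv (Bang U)"
| bv_der: "bv M \<Longrightarrow> bv N \<Longrightarrow> bv (BApp (Der M) N)"
| bv_app: "bvval U \<Longrightarrow> bv M \<Longrightarrow> bv (BApp U M)"
| bvval_var: "bvval (BVar x)"
| bvval_lam: "bv M \<Longrightarrow> bvval (BLam M)"

text \<open>Forgetful map; totalised (outside the fragment the values are irrelevant).\<close>
fun flat :: "bterm \<Rightarrow> lterm" where
  "flat (BVar x) = LVar x"
| "flat (BLam M) = LLam (flat M)"
| "flat (Bang U) = flat U"
| "flat (BApp (Der M) N) = LApp (flat M) (flat N)"
| "flat (BApp U M) = LApp (flat U) (flat M)"
| "flat (Der M) = flat M"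

end

theory Submission
  imports Defs
begin

text \<open>A \<open>\<mapsto>\<^sub>v\<close> redex of the fragment has the shape
  \<open>(\<lambda>x.M)(!U)\<close> with \<open>U\<close> a value, so by (2) it is erased to a \<open>\<beta>\<^sub>v\<close> redex; a
  \<open>\<mapsto>\<^sub>d\<close> redex \<open>der(!U)\<close> only occurs in head position of an application and is
  erased to nothing, so \<open>flat\<close> does not change.\<close>

lemma flat_cbv: "flat (cbv M) = M"
  by (induction M) auto

lemma flat_BApp: "(\<And>M. A \<noteq> Der M) \<Longrightarrow> flat (BApp A B) = LApp (flat A) (flat B)"
  by (cases A) auto

lemma flat_blift: "flat (blift t k) = llift (flat t) k"
  by (induction t arbitrary: k rule: flat.induct) auto

lemma bvval_not_Der: "bvval U \<Longrightarrow> U \<noteq> Der M"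
  by (auto elim: bvval.cases)

lemma is_value_flat: "bvval U \<Longrightarrow> is_value (flat U)"
  by (auto elim: bvval.cases)

lemma bv_bvval_blift:
  "(bv M \<longrightarrow> (\<forall>k. bv (blift M k))) \<and> (bvval U \<longrightarrow> (\<forall>k. bvval (blift U k)))"
  by (induction rule: bv_bvval.induct) (auto intro: bv_bvval.intros)

lemma bv_bvval_bsubst:
  "(bv M \<longrightarrow> (\<forall>S k. bvval S \<longrightarrow>
      bv (bsubst M S k) \<and> flat (bsubst M S k) = lsubst (flat M) (flat S) k))
    \<and> (bvval U \<longrightarrow> (\<forall>S k. bvval S \<longrightarrow>
      bvval (bsubst U S k) \<and> flat (bsubst U S k) = lsubst (flat U) (flat S) k))"
proof (induction rule: bv_bvval.induct)
  case (bv_app U M)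
  show ?case
  proof (intro allI impI)
    fix S k assume "bvval S"
    with bv_app have "bvval (bsubst U S k)" by blast
    then have "flat (bsubst (BApp U M) S k) = LApp (flat (bsubst U S k)) (flat (bsubst M S k))"
        "flat (BApp U M) = LApp (flat U) (flat M)"
      using bv_app by (simp_all add: flat_BApp bvval_not_Der)
    with bv_app \<open>bvval S\<close> show "bv (bsubst (BApp U M) S k)
        \<and> flat (bsubst (BApp U M) S k) = lsubst (flat (BApp U M)) (flat S) k"
      by (auto intro: bv_bvval.intros)
  qed
next
  case (bvval_lam M)
  show ?case
  proof (intro allI impI)
    fix S k assume "bvval S"
    then have "bvval (blift S 0)" using bv_bvval_blift by blast
    with bvval_lam show "bvval (bsubst (BLam M) S k)
        \<and> flat (bsubst (BLam M) S k) = lsubst (flat (BLam M)) (flat S) k"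
      by (auto intro: bv_bvval.intros simp: flat_blift)
  qed
qed (auto intro: bv_bvval.intros)

inductive_cases bv_BangE: "bv (Bang A)"
inductive_cases bvval_BLamE: "bvval (BLam A)"

lemma flat_root_v:
  assumes "bv (BApp (BLam M) (Bang S))"
  shows "bv (bsubst M S 0) \<and> flat (BApp (BLam M) (Bang S)) \<rightarrow>\<^sub>\<beta>\<^sub>v flat (bsubst M S 0)"
proof -
  from assms have "bv M" "bvval S"
    by (auto elim: bv.cases bvval_BLamE bv_BangE)
  then show ?thesis
    using bv_bvval_bsubst beta_v.root[OF is_value_flat] by auto
qed

lemma bv_bvval_bstep:
  "(bv M \<longrightarrow> (\<forall>T. M \<rightarrow>\<^sub>b T \<longrightarrow> bv T \<and> beta_v\<^sup>=\<^sup>= (flat M) (flat T)))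
    \<and> (bvval U \<longrightarrow> (\<forall>T. U \<rightarrow>\<^sub>b T \<longrightarrow> bvval T \<and> beta_v\<^sup>=\<^sup>= (flat U) (flat T)))"
proof (induction rule: bv_bvval.induct)
  case (bv_bang U)
  show ?case
  proof (intro allI impI)
    fix T assume "Bang U \<rightarrow>\<^sub>b T"
    then obtain U' where "T = Bang U'" "U \<rightarrow>\<^sub>b U'" by cases
    with bv_bang show "bv T \<and> beta_v\<^sup>=\<^sup>= (flat (Bang U)) (flat T)"
      by (auto intro: bv_bvval.intros)
  qed
next
  case (bv_der M N)
  show ?case
  proof (intro allI impI)
    fix T assume "BApp (Der M) N \<rightarrow>\<^sub>b T"
    then show "bv T \<and> beta_v\<^sup>=\<^sup>= (flat (BApp (Der M) N)) (flat T)"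
    proof cases
      case (appL D)
      from \<open>Der M \<rightarrow>\<^sub>b D\<close> show ?thesis
      proof cases
        case root_d
        with bv_der have "bvval D" by (auto elim: bv_BangE)
        with bv_der appL root_d show ?thesis
          by (auto intro: bv_bvval.intros simp: flat_BApp bvval_not_Der)
      qed (use bv_der appL in \<open>auto intro: bv_bvval.intros beta_v.appL\<close>)
    qed (use bv_der in \<open>auto intro: bv_bvval.intros beta_v.appR\<close>)
  qed
next
  case (bv_app U M)
  show ?case
  proof (intro allI impI)
    fix T assume "BApp U M \<rightarrow>\<^sub>b T"
    then show "bv T \<and> beta_v\<^sup>=\<^sup>= (flat (BApp U M)) (flat T)"
    proof cases
      case (root_v M' S)
      have "bv (BApp U M)" using bv_app.hyps by (rule bv_bvval.bv_app)
      with root_v flat_root_v[of M' S] show ?thesis by simp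
    next
      case (appL U')
      with bv_app have "bvval U'" "beta_v\<^sup>=\<^sup>= (flat U) (flat U')" by auto
      with bv_app appL show ?thesis
        by (auto intro: bv_bvval.intros beta_v.appL simp: flat_BApp bvval_not_Der)
    next
      case (appR M')
      with bv_app have "bv M'" "beta_v\<^sup>=\<^sup>= (flat M) (flat M')" by auto
      with bv_app appR show ?thesis
        by (auto intro: bv_bvval.intros beta_v.appR simp: flat_BApp bvval_not_Der)
    qed
  qed
next
  case (bvval_var x)
  show ?case by (auto elim: bstep.cases)
next
  case (bvval_lam M)
  show ?case
  proof (intro allI impI)
    fix T assume "BLam M \<rightarrow>\<^sub>b T"
    then obtain M' where "T = BLam M'" "M \<rightarrow>\<^sub>b M'" by cases
    with bvval_lam show "bvval T \<and> beta_v\<^sup>=\<^sup>= (flat (BLam M)) (flat T)"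
      by (auto intro: bv_bvval.intros beta_v.lam)
  qed
qed

theorem mainTheorem9:
  shows "(\<forall>M. flat (cbv M) = M)
    \<and> (\<forall>M U x. bv M \<longrightarrow> bvval U \<longrightarrow>
          bv (bsubst M U x) \<and> flat (bsubst M U x) = lsubst (flat M) (flat U) x)
    \<and> (\<forall>M T. bv M \<longrightarrow> M \<rightarrow>\<^sub>b T \<longrightarrow>
          bv T \<and> (flat M = flat T \<or> flat M \<rightarrow>\<^sub>\<beta>\<^sub>v flat T))"
  using flat_cbv bv_bvval_bsubst bv_bvval_bstep by blast

end
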